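(* Let $G$ be a connected $m$-uniform hypergraph on $n$ vertices. Suppose its incidence matrix $B_G$ has Smith normal form over $\mathbb{Z}_m$ with nonzero diagonal entries $d_1,\dots,d_r$. Then $|\mathbb{PV}_0(\mathcal{L}(G))|=s(\mathcal{L}(G))=s(\mathcal{A}(G))=m^{n-1-r}\prod_{i=1}^r d_i$.
   Context: An $m$-uniform hypergraph $G$ on vertices $v_1,\dots,v_n$ has edges that are $m$-subsets; it is connected in the usual sense. Adjacency tensor $\mathcal{A}(G)$: order $m$, dimension $n$, entry $\frac1{(m-1)!}$ at $(i_1,\dots,i_m)$ if $\{v_{i_1},\dots,v_{i_m}\}$ is an edge, $0$ otherwise. $\mathcal{L}(G)=\mathcal{D}(G)-\mathcal{A}(G)$, where $\mathcal{D}(G)$ is diagonal with the vertex degrees. Incidence matrix $B_G$: rows indexed by edges, columns by vertices, $b_{e,v}=1$ if $v\in e$, else $0$. Smith normal form over $\mathbb{Z}_m$: invertible $P,Q$ over $\mathbb{Z}_m$ with $PB_GQ$ diagonal with entries $d_1,\dots,d_r,0,\dots,0$, $1\le d_i\le m-1$, $d_i\mid d_{i+1}$, $d_i\mid m$. For a tensor $\mathcal{T}$, $(\mathcal{T}x^{m-1})_i=\sum_{i_2,\dots,i_m}t_{ii_2\cdots i_m}x_{i_2}\cdots x_{i_m}$ and $\mathbb{PV}_\lambda(\mathcal{T})=\{x\in\mathbb{P}^{n-1}:\mathcal{T}x^{m-1}=\lambda x^{[m-1]}\}$ with $x^{[m-1]}=(x_i^{m-1})$. Stabilizing index: $s(\mathcal{T})=|\{D=\mathrm{diag}(d_1,\dots,d_n)\text{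 invertible complex}:\mathcal{T}=D^{-(m-1)}\mathcal{T}D,\ d_1=1\}|$, where $D^{-(m-1)}\mathcal{T}D$ has entries $d_{i_1}^{-(m-1)}t_{i_1\cdots i_m}d_{i_2}\cdots d_{i_m}$. *)

theory Defs
  imports Complex_Main "HOL-Number_Theory.Cong"
begin

text \<open>Vertices v_1,...,v_n are represented by 0,...,n-1 (v_1 is vertex 0).
  Tensors of order m and dimension n are functions on index lists of length m
  with entries < n.\<close>

definition idx_tuples :: "nat \<Rightarrow> nat \<Rightarrow> nat list set" where
  "idx_tuples k n = {is. length is = k \<and> set is \<subseteq> {..<n}}"

definition uniform_hypergraph :: "nat \<Rightarrow> nat \<Rightarrow> nat set set \<Rightarrow> bool" where
  "uniform_hypergraph m n E \<longleftrightarrow> (\<forall>e\<in>E. e \<subseteq> {..<n} \<and> card e = m)"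

definition hg_connected :: "nat \<Rightarrow> nat set set \<Rightarrow> bool" where
  "hg_connected n E \<longleftrightarrow>
     (\<forall>i<n. \<forall>j<n. (i, j) \<in> {(a, b). \<exists>e\<in>E. a \<in> e \<and> b \<in> e}\<^sup>*)"

definition hg_degree :: "nat set set \<Rightarrow> nat \<Rightarrow> nat" where
  "hg_degree E i = card {e\<in>E. i \<in> e}"

definition adj_tensor :: "nat \<Rightarrow> nat set set \<Rightarrow> nat list \<Rightarrow> complex" where
  "adj_tensor m E = (\<lambda>is. if length is = m \<and> set is \<in> E
                           then 1 / of_nat (fact (m - 1)) else 0)"

definition deg_tensor :: "nat \<Rightarrow> nat set set \<Rightarrow> nat list \<Rightarrow> complex" where
  "deg_tensor m E = (\<lambda>is. if length is = m \<and> is \<noteq> [] \<and> (\<forall>j\<in>set is. j = hd is)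
                           then of_nat (hg_degree E (hd is)) else 0)"

definition lap_tensor :: "nat \<Rightarrow> nat set set \<Rightarrow> nat list \<Rightarrow> complex" where
  "lap_tensor m E = (\<lambda>is. deg_tensor m E is - adj_tensor m E is)"

definition tensor_apply ::
  "nat \<Rightarrow> nat \<Rightarrow> (nat list \<Rightarrow> complex) \<Rightarrow> (nat \<Rightarrow> complex) \<Rightarrow> nat \<Rightarrow> complex" where
  "tensor_apply m n T x i = (\<Sum>js\<in>idx_tuples (m - 1) n. T (i # js) * prod_list (map x js))"

definition cvec :: "nat \<Rightarrow> (nat \<Rightarrow> complex) set" where
  "cvec n = {x. \<forall>i\<ge>n. x i = 0}"

definition proj_point :: "(nat \<Rightarrow> complex) \<Rightarrow> (nat \<Rightarrow> complex) set" where
  "proj_point x = {(\<lambda>i. c * x i) | c. c \<noteq> 0}"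

definition eigvariety ::
  "nat \<Rightarrow> nat \<Rightarrow> (nat list \<Rightarrow> complex) \<Rightarrow> complex \<Rightarrow> (nat \<Rightarrow> complex) set set" where
  "eigvariety m n T lam = proj_point ` {x \<in> cvec n. x \<noteq> (\<lambda>_. 0) \<and>
       (\<forall>i<n. tensor_apply m n T x i = lam * x i ^ (m - 1))}"

text \<open>Invertible diagonal matrices diag(d_1,...,d_n) with d_1 = 1 (coordinates
  outside {0..<n} normalised to 1) fixing T under D^{-(m-1)} T D.\<close>
definition stab_set :: "nat \<Rightarrow> nat \<Rightarrow> (nat list \<Rightarrow> complex) \<Rightarrow> (nat \<Rightarrow> complex) set" where
  "stab_set m n T = {d. (\<forall>i<n. d i \<noteq> 0) \<and> (\<forall>i\<ge>n. d i = 1) \<and> d 0 = 1 \<and>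
      (\<forall>is\<in>idx_tuples m n.
          T is = inverse (d (hd is) ^ (m - 1)) * T is * prod_list (map d (tl is)))}"

definition stab_index :: "nat \<Rightarrow> nat \<Rightarrow> (nat list \<Rightarrow> complex) \<Rightarrow> nat" where
  "stab_index m n T = card (stab_set m n T)"

text \<open>Incidence matrix w.r.t. an enumeration es of the edges: rows = edges, columns = vertices.\<close>
definition incidence :: "nat set list \<Rightarrow> nat \<Rightarrow> nat \<Rightarrow> int" where
  "incidence es i j = (if j \<in> es ! i then 1 else 0)"

definition matmul :: "nat \<Rightarrow> (nat \<Rightarrow> nat \<Rightarrow> int) \<Rightarrow> (nat \<Rightarrow> nat \<Rightarrow> int) \<Rightarrow> nat \<Rightarrow> nat \<Rightarrow> int" where
  "matmul k A B i j = (\<Sum>l<k. A i l * B l j)"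

definition invertible_mod :: "nat \<Rightarrow> nat \<Rightarrow> (nat \<Rightarrow> nat \<Rightarrow> int) \<Rightarrow> bool" where
  "invertible_mod m k P \<longleftrightarrow> (\<exists>P'. \<forall>i<k. \<forall>j<k.
       [matmul k P P' i j = (if i = j then 1 else 0)] (mod int m) \<and>
       [matmul k P' P i j = (if i = j then 1 else 0)] (mod int m))"

text \<open>The p x q matrix B has Smith normal form over Z_m with nonzero diagonal
  entries d 0, ..., d (r-1) (i.e. d_1, ..., d_r).\<close>
definition smith_normal_form_mod ::
  "nat \<Rightarrow> nat \<Rightarrow> nat \<Rightarrow> (nat \<Rightarrow> nat \<Rightarrow> int) \<Rightarrow> nat \<Rightarrow> (nat \<Rightarrow> int) \<Rightarrow> bool" where
  "smith_normal_form_mod m p q B r d \<longleftrightarrow>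
     r \<le> p \<and> r \<le> q \<and>
     (\<forall>i<r. 1 \<le> d i \<and> d i \<le> int m - 1 \<and> d i dvd int m) \<and>
     (\<forall>i. i + 1 < r \<longrightarrow> d i dvd d (i + 1)) \<and>
     (\<exists>P Q. invertible_mod m p P \<and> invertible_mod m q Q \<and>
        (\<forall>i<p. \<forall>j<q. [matmul q (matmul p P B) Q i j = (if i = j \<and> i < r then d i else 0)] (mod int m)))"

end

theory Submission
  imports Defs "HOL-Library.FuncSet" "HOL-Combinatorics.Multiset_Permutations"
begin

(* A diagonal scaling d with d_0 = 1 stabilizes A(G) iff d_i^(m-1) is the product of d over
   e - {i} for every edge e containing i; the diagonal part of L(G) is invariant under every
   scaling, so L(G) has the same stabilizer. By connectivity these scalings are exactly the
   vectors of m-th roots of unity d_i = w^(a_i), w = exp(2 pi i / m), with the sum of a over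
   every edge divisible by m, i.e. the kernel of the incidence matrix over Z_m, normalised by
   a_0 = 0. Changing coordinates by the Smith normal form shows that the kernel has
   m^(n-r) d_1 ... d_r elements, and since every row of B_G sums to m, shifting by constant
   vectors shows that the normalisation a_0 = 0 divides this number by m.
   For the eigenvariety, take a zero-eigenvector x of L(G) and a vertex i of maximal |x_i|: the
   terms of the sum over the edges at i have modulus at most |x_i|^(m-1) and add up to
   deg(i) x_i^(m-1), so each equals x_i^(m-1) and |x| is constant on these edges. By
   connectivity |x| is constant, every vertex is maximal, and x / x_0 is a stabilizing scaling;
   conversely every stabilizing scaling is a zero-eigenvector. *)

section \<open>Counting solutions of linear congruences\<close>

definition mat_vec :: "nat \<Rightarrow> (nat \<Rightarrow> nat \<Rightarrow> int) \<Rightarrow> (nat \<Rightarrow> int) \<Rightarrow> nat \<Rightarrow> int" where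
  "mat_vec k A x i = (\<Sum>l<k. A i l * x l)"

definition residue_vectors :: "nat \<Rightarrow> nat \<Rightarrow> (nat \<Rightarrow> int) set" where
  "residue_vectors n m = PiE {..<n} (\<lambda>_. {0..<int m})"

definition mod_vec :: "nat \<Rightarrow> nat \<Rightarrow> (nat \<Rightarrow> int) \<Rightarrow> nat \<Rightarrow> int" where
  "mod_vec n m x = restrict (\<lambda>j. x j mod int m) {..<n}"

definition null_space_mod :: "nat \<Rightarrow> nat \<Rightarrow> nat \<Rightarrow> (nat \<Rightarrow> nat \<Rightarrow> int) \<Rightarrow> (nat \<Rightarrow> int) set" where
  "null_space_mod m p n B = {a \<in> residue_vectors n m. \<forall>k<p. [mat_vec n B a k = 0] (mod int m)}"

lemma mat_vec_matmul: "mat_vec k1 A (mat_vec k2 B x) i = mat_vec k2 (matmul k1 A B) x i"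
  unfolding mat_vec_def matmul_def
  by (simp add: sum_distrib_left sum_distrib_right mult.assoc sum.swap[of _ "{..<k1}"])

lemma mat_vec_zero [simp]: "mat_vec k A (\<lambda>_. 0) i = 0"
  by (simp add: mat_vec_def)

lemma mat_vec_cong_mod:
  assumes "\<And>l. l < k \<Longrightarrow> [A i l = C i l] (mod M)" and "\<And>l. l < k \<Longrightarrow> [x l = y l] (mod M)"
  shows "[mat_vec k A x i = mat_vec k C y i] (mod M)"
  unfolding mat_vec_def using assms by (intro cong_sum cong_mult) auto

lemma mat_vec_identity_mod:
  assumes "\<And>j. j < k \<Longrightarrow> [C i j = (if i = j then 1 else 0)] (mod M)" and "i < k"
  shows "[mat_vec k C x i = x i] (mod M)"
proof -
  have "[mat_vec k C x i = mat_vec k (\<lambda>i j. if i = j then 1 else 0) x i] (mod M)"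
    using assms(1) by (intro mat_vec_cong_mod) auto
  also have "mat_vec k (\<lambda>i j. if i = j then 1 else 0) x i = x i"
    using assms(2) by (simp add: mat_vec_def if_distrib[of "\<lambda>c. c * _"] cong: if_cong)
  finally show ?thesis .
qed

lemma mat_vec_inverse_mod:
  assumes "\<And>i j. i < k \<Longrightarrow> j < k \<Longrightarrow> [matmul k C C' i j = (if i = j then 1 else 0)] (mod M)"
    and "i < k"
  shows "[mat_vec k C (mat_vec k C' x) i = x i] (mod M)"
  unfolding mat_vec_matmul using assms by (intro mat_vec_identity_mod)

lemma mat_vec_add_const:
  "mat_vec n B (\<lambda>j. x j + c) k = mat_vec n B x k + c * (\<Sum>j<n. B k j)"
  by (simp add: mat_vec_def sum.distrib algebra_simps sum_distrib_left)

lemma residue_vectorsD: "a \<in> residue_vectors n m \<Longrightarrow> i < n \<Longrightarrow> 0 \<le> a i \<and> a i < int m"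
  by (auto simp: residue_vectors_def PiE_def Pi_def)

lemma mod_vec_in_residue_vectors: "m > 0 \<Longrightarrow> mod_vec n m x \<in> residue_vectors n m"
  by (auto simp: mod_vec_def residue_vectors_def)

lemma mod_vec_cong: "j < n \<Longrightarrow> [mod_vec n m x j = x j] (mod int m)"
  by (simp add: mod_vec_def cong_def)

lemma mod_vec_eq_residue:
  assumes "a \<in> residue_vectors n m" and "\<And>j. j < n \<Longrightarrow> [x j = a j] (mod int m)"
  shows "mod_vec n m x = a"
proof (rule PiE_ext)
  show "a \<in> PiE {..<n} (\<lambda>_. UNIV)" using assms(1) by (auto simp: residue_vectors_def PiE_def)
  show "mod_vec n m x \<in> PiE {..<n} (\<lambda>_. UNIV)" by (simp add: mod_vec_def)
  fix j assume j: "j \<in> {..<n}"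
  then have "x j mod int m = a j mod int m" using assms(2) by (simp add: cong_def)
  also have "a j mod int m = a j" using residue_vectorsD[OF assms(1)] j by simp
  finally show "mod_vec n m x j = a j" using j by (simp add: mod_vec_def)
qed

lemma mat_vec_mod_vec_cong: "[mat_vec n A (mod_vec n m x) i = mat_vec n A x i] (mod int m)"
  by (intro mat_vec_cong_mod cong_refl mod_vec_cong)

lemma card_mult_zero_mod:
  fixes D M :: int
  assumes "1 \<le> D" "D dvd M" "M > 0"
  shows "card {x\<in>{0..<M}. [D * x = 0] (mod M)} = nat D"
proof -
  obtain c where c: "M = D * c" using assms(2) by blast
  have c_pos: "c > 0" using c assms by (simp add: zero_less_mult_iff)
  have "{x\<in>{0..<M}. [D * x = 0] (mod M)} = (\<lambda>t. c * t) ` {0..<D}"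
  proof (intro set_eqI iffI)
    fix x assume x: "x \<in> {x\<in>{0..<M}. [D * x = 0] (mod M)}"
    then have "D * c dvd D * x" using c by (simp add: cong_0_iff)
    then obtain t where t: "x = c * t" using assms(1) by auto
    then have "0 \<le> t" "t < D" using x c c_pos by (auto simp: zero_le_mult_iff mult.commute)
    then show "x \<in> (\<lambda>t. c * t) ` {0..<D}" using t by (intro image_eqI[of _ _ t]) auto
  next
    fix x assume "x \<in> (\<lambda>t. c * t) ` {0..<D}"
    then obtain t where "x = c * t" "t \<in> {0..<D}" by blast
    then show "x \<in> {x\<in>{0..<M}. [D * x = 0] (mod M)}"
      using c_pos c by (auto simp: cong_0_iff mult.commute)
  qed
  moreover have "inj_on (\<lambda>t. c * t) {0..<D}" using c_pos by (auto simp: inj_on_def)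
  ultimately show ?thesis by (simp add: card_image)
qed

lemma invertible_mod_mat_vec_eq_0_iff:
  assumes "invertible_mod m p P"
  shows "(\<forall>i<p. [mat_vec p P y i = 0] (mod int m)) \<longleftrightarrow> (\<forall>i<p. [y i = 0] (mod int m))"
proof
  obtain P' where P': "\<And>i j. i < p \<Longrightarrow> j < p \<Longrightarrow> [matmul p P' P i j = (if i = j then 1 else 0)] (mod int m)"
    using assms unfolding invertible_mod_def by blast
  assume Py: "\<forall>i<p. [mat_vec p P y i = 0] (mod int m)"
  show "\<forall>i<p. [y i = 0] (mod int m)"
  proof (intro allI impI)
    fix i assume i: "i < p"
    have "[y i = mat_vec p P' (mat_vec p P y) i] (mod int m)"
      using mat_vec_inverse_mod[OF P' i] by (rule cong_sym)
    also have "[mat_vec p P' (mat_vec p P y) i = mat_vec p P' (\<lambda>_. 0) i] (mod int m)"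
      using Py by (intro mat_vec_cong_mod) auto
    finally show "[y i = 0] (mod int m)" by simp
  qed
next
  assume "\<forall>i<p. [y i = 0] (mod int m)"
  then have "[mat_vec p P y i = mat_vec p P (\<lambda>_. 0) i] (mod int m)" for i
    by (intro mat_vec_cong_mod) auto
  then show "\<forall>i<p. [mat_vec p P y i = 0] (mod int m)" by simp
qed

lemma null_space_mod_matmul_left:
  assumes "invertible_mod m p P"
  shows "null_space_mod m p n (matmul p P B) = null_space_mod m p n B"
  unfolding null_space_mod_def mat_vec_matmul[symmetric]
  using invertible_mod_mat_vec_eq_0_iff[OF assms] by blast

lemma mod_vec_mat_vec_left_inverse:
  assumes "a \<in> residue_vectors n m"
    and "\<And>i j. i < n \<Longrightarrow> j < n \<Longrightarrow> [matmul n C' C i j = (if i = j then 1 else 0)] (mod int m)"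
  shows "mod_vec n m (mat_vec n C' (mod_vec n m (mat_vec n C a))) = a"
proof (rule mod_vec_eq_residue[OF assms(1)])
  fix j assume "j < n"
  have "[mat_vec n C' (mod_vec n m (mat_vec n C a)) j = mat_vec n C' (mat_vec n C a) j] (mod int m)"
    by (rule mat_vec_mod_vec_cong)
  also have "[mat_vec n C' (mat_vec n C a) j = a j] (mod int m)"
    using assms(2) \<open>j < n\<close> by (rule mat_vec_inverse_mod)
  finally show "[mat_vec n C' (mod_vec n m (mat_vec n C a)) j = a j] (mod int m)" .
qed

lemma mod_vec_mat_vec_in_null_space_mod_iff:
  assumes "m > 0"
  shows "mod_vec n m (mat_vec n Q a) \<in> null_space_mod m p n B \<longleftrightarrow>
    (\<forall>k<p. [mat_vec n (matmul n B Q) a k = 0] (mod int m))"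
proof -
  have "[mat_vec n B (mod_vec n m (mat_vec n Q a)) k = mat_vec n (matmul n B Q) a k] (mod int m)" for k
    unfolding mat_vec_matmul[symmetric] by (rule mat_vec_mod_vec_cong)
  then show ?thesis
    using mod_vec_in_residue_vectors[OF assms] unfolding null_space_mod_def by (simp add: cong_def)
qed

lemma card_null_space_mod_matmul_right:
  assumes "invertible_mod m n Q" and "m > 0"
  shows "card (null_space_mod m p n (matmul n B Q)) = card (null_space_mod m p n B)"
proof -
  obtain Q' where
    QQ': "\<And>i j. i < n \<Longrightarrow> j < n \<Longrightarrow> [matmul n Q Q' i j = (if i = j then 1 else 0)] (mod int m)" and
    Q'Q: "\<And>i j. i < n \<Longrightarrow> j < n \<Longrightarrow> [matmul n Q' Q i j = (if i = j then 1 else 0)] (mod int m)"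
    using assms(1) unfolding invertible_mod_def by blast
  note null_iff = mod_vec_mat_vec_in_null_space_mod_iff[OF assms(2)]
  have "bij_betw (\<lambda>a. mod_vec n m (mat_vec n Q a))
      (null_space_mod m p n (matmul n B Q)) (null_space_mod m p n B)"
  proof (rule bij_betw_byWitness[where f' = "\<lambda>b. mod_vec n m (mat_vec n Q' b)"])
    show "\<forall>a\<in>null_space_mod m p n (matmul n B Q). mod_vec n m (mat_vec n Q' (mod_vec n m (mat_vec n Q a))) = a"
      using mod_vec_mat_vec_left_inverse Q'Q unfolding null_space_mod_def by blast
    show "\<forall>b\<in>null_space_mod m p n B. mod_vec n m (mat_vec n Q (mod_vec n m (mat_vec n Q' b))) = b"
      using mod_vec_mat_vec_left_inverse QQ' unfolding null_space_mod_def by blast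
    show "(\<lambda>a. mod_vec n m (mat_vec n Q a)) ` null_space_mod m p n (matmul n B Q) \<subseteq> null_space_mod m p n B"
      using null_iff unfolding null_space_mod_def by blast
    show "(\<lambda>b. mod_vec n m (mat_vec n Q' b)) ` null_space_mod m p n B \<subseteq> null_space_mod m p n (matmul n B Q)"
    proof (rule image_subsetI)
      fix b assume b: "b \<in> null_space_mod m p n B"
      then have "mod_vec n m (mat_vec n Q (mod_vec n m (mat_vec n Q' b))) \<in> null_space_mod m p n B"
        using mod_vec_mat_vec_left_inverse[OF _ QQ'] by (simp add: null_space_mod_def)
      then show "mod_vec n m (mat_vec n Q' b) \<in> null_space_mod m p n (matmul n B Q)"
        using null_iff mod_vec_in_residue_vectors[OF assms(2)] unfolding null_space_mod_def by blast
    qed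
  qed
  then show ?thesis by (rule bij_betw_same_card)
qed

lemma null_space_mod_cong:
  assumes "\<And>i j. i < p \<Longrightarrow> j < n \<Longrightarrow> [B i j = C i j] (mod int m)"
  shows "null_space_mod m p n B = null_space_mod m p n C"
proof -
  have "[mat_vec n B a k = mat_vec n C a k] (mod int m)" if "k < p" for a k
    using assms that by (intro mat_vec_cong_mod) auto
  then show ?thesis unfolding null_space_mod_def by (auto simp: cong_def)
qed

lemma card_null_space_mod_diagonal:
  assumes "r \<le> p" "r \<le> n" "m > 0" and d: "\<And>i. i < r \<Longrightarrow> 1 \<le> d i \<and> d i dvd int m"
  shows "int (card (null_space_mod m p n (\<lambda>i j. if i = j \<and> i < r then d i else 0)))
           = int m ^ (n - r) * (\<Prod>i<r. d i)"
proof -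
  define T where "T i = {x\<in>{0..<int m}. i < r \<longrightarrow> [d i * x = 0] (mod int m)}" for i
  have diag: "mat_vec n (\<lambda>i j. if i = j \<and> i < r then d i else 0) a k = (if k < r then d k * a k else 0)"
    for a k
    using assms(2) by (auto simp: mat_vec_def if_distrib[of "\<lambda>c. c * _"] cong: if_cong)
  have "null_space_mod m p n (\<lambda>i j. if i = j \<and> i < r then d i else 0) = PiE {..<n} T"
    using assms(1,2) unfolding null_space_mod_def residue_vectors_def T_def diag
    by (auto simp: PiE_def Pi_def)
  then have "int (card (null_space_mod m p n (\<lambda>i j. if i = j \<and> i < r then d i else 0)))
      = (\<Prod>i<n. int (card (T i)))"
    by (simp add: card_PiE)
  also have "\<dots> = (\<Prod>i<r. int (card (T i))) * (\<Prod>i\<in>{r..<n}. int (card (T i)))"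
    using assms(2) by (subst prod.union_disjoint[symmetric]) (auto intro: prod.cong)
  also have "(\<Prod>i<r. int (card (T i))) = (\<Prod>i<r. d i)"
    using card_mult_zero_mod d assms(3) by (intro prod.cong) (auto simp: T_def order.trans[OF zero_le_one])
  also have "(\<Prod>i\<in>{r..<n}. int (card (T i))) = (\<Prod>i\<in>{r..<n}. int m)"
  proof (intro prod.cong refl)
    fix i assume "i \<in> {r..<n}"
    then have "T i = {0..<int m}" by (auto simp: T_def)
    then show "int (card (T i)) = int m" by simp
  qed
  finally show ?thesis by simp
qed

lemma card_null_space_mod_smith:
  assumes "smith_normal_form_mod m p n B r d" and "m > 0"
  shows "int (card (null_space_mod m p n B)) = int m ^ (n - r) * (\<Prod>i<r. d i)"
proof -
  obtain P Q where P: "invertible_mod m p P" and Q: "invertible_mod m n Q"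
    and PBQ: "\<And>i j. i < p \<Longrightarrow> j < n \<Longrightarrow>
      [matmul n (matmul p P B) Q i j = (if i = j \<and> i < r then d i else 0)] (mod int m)"
    using assms(1) unfolding smith_normal_form_mod_def by blast
  have "card (null_space_mod m p n B) = card (null_space_mod m p n (matmul p P B))"
    by (simp add: null_space_mod_matmul_left[OF P])
  also have "\<dots> = card (null_space_mod m p n (matmul n (matmul p P B) Q))"
    by (simp add: card_null_space_mod_matmul_right[OF Q assms(2)])
  also have "\<dots> = card (null_space_mod m p n (\<lambda>i j. if i = j \<and> i < r then d i else 0))"
    using PBQ by (subst null_space_mod_cong[of p n _ "\<lambda>i j. if i = j \<and> i < r then d i else 0"]) auto
  finally show ?thesis
    using assms unfolding smith_normal_form_mod_def by (simp add: card_null_space_mod_diagonal)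
qed

lemma mod_vec_shift_in_null_space_mod:
  assumes rows: "\<And>k. k < p \<Longrightarrow> [(\<Sum>j<n. B k j) = 0] (mod int m)"
    and "m > 0" and a: "a \<in> null_space_mod m p n B"
  shows "mod_vec n m (\<lambda>j. a j + c) \<in> null_space_mod m p n B"
proof -
  have "[mat_vec n B (mod_vec n m (\<lambda>j. a j + c)) k = 0] (mod int m)" if "k < p" for k
  proof -
    have "[mat_vec n B (mod_vec n m (\<lambda>j. a j + c)) k = mat_vec n B a k + c * (\<Sum>j<n. B k j)] (mod int m)"
      unfolding mat_vec_add_const[symmetric] by (rule mat_vec_mod_vec_cong)
    also have "[mat_vec n B a k + c * (\<Sum>j<n. B k j) = 0 + c * 0] (mod int m)"
      using a rows that unfolding null_space_mod_def by (intro cong_add cong_mult) auto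
    finally show ?thesis by simp
  qed
  then show ?thesis using mod_vec_in_residue_vectors[OF assms(2)] by (simp add: null_space_mod_def)
qed

lemma mod_vec_shift_cancel:
  assumes "a \<in> residue_vectors n m" and "[c + c' = 0] (mod int m)"
  shows "mod_vec n m (\<lambda>j. mod_vec n m (\<lambda>j. a j + c) j + c') = a"
proof (rule mod_vec_eq_residue[OF assms(1)])
  fix j assume "j < n"
  then have "[mod_vec n m (\<lambda>j. a j + c) j + c' = (a j + c) + c'] (mod int m)"
    by (intro cong_add mod_vec_cong cong_refl)
  also have "[(a j + c) + c' = a j + 0] (mod int m)"
    unfolding add.assoc using assms(2) by (intro cong_add cong_refl)
  finally show "[mod_vec n m (\<lambda>j. a j + c) j + c' = a j] (mod int m)" by simp
qed

lemma card_null_space_mod_eq_mult_card_fixed: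
  assumes rows: "\<And>k. k < p \<Longrightarrow> [(\<Sum>j<n. B k j) = 0] (mod int m)" and "m > 0" "n > 0"
  shows "card (null_space_mod m p n B) = m * card {a \<in> null_space_mod m p n B. a 0 = 0}"
proof -
  let ?Null = "null_space_mod m p n B"
  let ?Fixed = "{a \<in> ?Null. a 0 = 0}"
  have shift: "mod_vec n m (\<lambda>j. a j + c) \<in> ?Null" if "a \<in> ?Null" for a c
    using rows assms(2) that by (rule mod_vec_shift_in_null_space_mod)
  have residue: "a \<in> residue_vectors n m" "a 0 \<in> {0..<int m}" if "a \<in> ?Null" for a
    using that assms(3) unfolding null_space_mod_def by (auto simp: residue_vectors_def PiE_iff)
  have "bij_betw (\<lambda>(a, c). mod_vec n m (\<lambda>j. a j + c)) (?Fixed \<times> {0..<int m}) ?Null"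
  proof (rule bij_betw_byWitness[where f' = "\<lambda>a. (mod_vec n m (\<lambda>j. a j + - a 0), a 0)"])
    show "\<forall>x\<in>?Fixed \<times> {0..<int m}. (\<lambda>a. (mod_vec n m (\<lambda>j. a j + - a 0), a 0))
        ((\<lambda>(a, c). mod_vec n m (\<lambda>j. a j + c)) x) = x"
    proof
      fix x assume "x \<in> ?Fixed \<times> {0..<int m}"
      then obtain a c where x: "x = (a, c)" and a: "a \<in> ?Null" "a 0 = 0" and c: "c \<in> {0..<int m}"
        by blast
      have "mod_vec n m (\<lambda>j. a j + c) 0 = c" using a(2) c assms(3) by (simp add: mod_vec_def)
      moreover have "mod_vec n m (\<lambda>j. mod_vec n m (\<lambda>j. a j + c) j + - c) = a"
        using residue(1)[OF a(1)] by (rule mod_vec_shift_cancel) simp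
      ultimately show "(\<lambda>a. (mod_vec n m (\<lambda>j. a j + - a 0), a 0))
          ((\<lambda>(a, c). mod_vec n m (\<lambda>j. a j + c)) x) = x" unfolding x by simp
    qed
    show "\<forall>a\<in>?Null. (\<lambda>(a, c). mod_vec n m (\<lambda>j. a j + c)) (mod_vec n m (\<lambda>j. a j + - a 0), a 0) = a"
    proof
      fix a assume "a \<in> ?Null"
      show "(\<lambda>(a, c). mod_vec n m (\<lambda>j. a j + c)) (mod_vec n m (\<lambda>j. a j + - a 0), a 0) = a"
        using mod_vec_shift_cancel[OF residue(1)[OF \<open>a \<in> ?Null\<close>], of "- a 0" "a 0"] by simp
    qed
    show "(\<lambda>(a, c). mod_vec n m (\<lambda>j. a j + c)) ` (?Fixed \<times> {0..<int m}) \<subseteq> ?Null"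
    proof (rule image_subsetI)
      fix x assume "x \<in> ?Fixed \<times> {0..<int m}"
      then obtain a c where "x = (a, c)" "a \<in> ?Null" by blast
      then show "(\<lambda>(a, c). mod_vec n m (\<lambda>j. a j + c)) x \<in> ?Null" using shift by simp
    qed
    show "(\<lambda>a. (mod_vec n m (\<lambda>j. a j + - a 0), a 0)) ` ?Null \<subseteq> ?Fixed \<times> {0..<int m}"
    proof (rule image_subsetI)
      fix a assume a: "a \<in> ?Null"
      have "mod_vec n m (\<lambda>j. a j + - a 0) 0 = 0" using assms(3) by (simp add: mod_vec_def)
      then show "(mod_vec n m (\<lambda>j. a j + - a 0), a 0) \<in> ?Fixed \<times> {0..<int m}"
        using shift[OF a, of "- a 0"] residue(2)[OF a] by simp
    qed
  qed
  then have "card ?Null = card (?Fixed \<times> {0..<int m})" by (simp add: bij_betw_same_card)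
  also have "\<dots> = m * card ?Fixed" by (simp add: card_cartesian_product)
  finally show ?thesis .
qed

section \<open>Stabilizers of the adjacency and Laplacian tensors\<close>

definition edge_balanced :: "nat \<Rightarrow> nat \<Rightarrow> nat set set \<Rightarrow> (nat \<Rightarrow> complex) \<Rightarrow> bool" where
  "edge_balanced m n E d \<longleftrightarrow> (\<forall>i<n. d i \<noteq> 0) \<and> (\<forall>i\<ge>n. d i = 1) \<and> d 0 = 1 \<and>
     (\<forall>e\<in>E. \<forall>i\<in>e. d i ^ (m - 1) = (\<Prod>j\<in>e - {i}. d j))"

lemma uniform_hypergraph_edgeD:
  assumes "uniform_hypergraph m n E" "e \<in> E"
  shows "e \<subseteq> {..<n}" "card e = m" "finite e"
  using assms unfolding uniform_hypergraph_def by (auto intro: finite_subset)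

lemma finite_uniform_hypergraph: "uniform_hypergraph m n E \<Longrightarrow> finite E"
  unfolding uniform_hypergraph_def by (rule finite_subset[of _ "Pow {..<n}"]) auto

lemma finite_idx_tuples: "finite (idx_tuples k n)"
  unfolding idx_tuples_def using finite_lists_length_eq[of "{..<n}" k] by (simp add: conj_commute)

lemma ball_idx_tuples_Suc:
  "(\<forall>is\<in>idx_tuples (Suc k) n. P is) \<longleftrightarrow> (\<forall>i<n. \<forall>js\<in>idx_tuples k n. P (i # js))"
  unfolding idx_tuples_def by (auto simp: length_Suc_conv)

lemma prod_list_permutations_of_set:
  "xs \<in> permutations_of_set A \<Longrightarrow> prod_list (map f xs) = prod f A"
  by (auto simp: permutations_of_set_def prod.distinct_set_conv_list)

lemma tuples_completing_edge:
  assumes "uniform_hypergraph m n E" and "m \<ge> 1" and "i < n"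
  shows "{js \<in> idx_tuples (m - 1) n. set (i # js) \<in> E} = (\<Union>e\<in>{e\<in>E. i \<in> e}. permutations_of_set (e - {i}))"
proof (intro set_eqI iffI)
  fix js assume js: "js \<in> {js \<in> idx_tuples (m - 1) n. set (i # js) \<in> E}"
  then have "length (i # js) = card (set (i # js))"
    using uniform_hypergraph_edgeD(2)[OF assms(1)] assms(2) by (auto simp: idx_tuples_def)
  then have "distinct (i # js)" by (metis card_distinct)
  then show "js \<in> (\<Union>e\<in>{e\<in>E. i \<in> e}. permutations_of_set (e - {i}))"
    using js by (intro UN_I[of "set (i # js)"]) auto
next
  fix js assume "js \<in> (\<Union>e\<in>{e\<in>E. i \<in> e}. permutations_of_set (e - {i}))"
  then obtain e where e: "e \<in> E" "i \<in> e" and js: "js \<in> permutations_of_set (e - {i})" by blast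
  have "length js = m - 1"
    using length_finite_permutations_of_set[OF js] uniform_hypergraph_edgeD[OF assms(1) e(1)] e(2) by simp
  moreover have "set js \<subseteq> {..<n}" "set (i # js) = e"
    using permutations_of_setD(1)[OF js] uniform_hypergraph_edgeD(1)[OF assms(1) e(1)] e(2) by auto
  ultimately show "js \<in> {js \<in> idx_tuples (m - 1) n. set (i # js) \<in> E}"
    using e by (simp add: idx_tuples_def)
qed

lemma eq_inverse_mult_mult_iff:
  fixes a x y :: "'a :: field"
  assumes "x \<noteq> 0"
  shows "a = inverse x * a * y \<longleftrightarrow> a = 0 \<or> x = y"
proof -
  have "a = inverse x * a * y \<longleftrightarrow> a * x = a * y"
    using assms by (auto simp: field_simps)
  then show ?thesis by auto
qed

lemma stab_set_cong:
  assumes "\<And>d is. \<forall>i<n. d i \<noteq> 0 \<Longrightarrow> is \<in> idx_tuples m n \<Longrightarrow>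
      T is = inverse (d (hd is) ^ (m - 1)) * T is * prod_list (map d (tl is)) \<longleftrightarrow>
      S is = inverse (d (hd is) ^ (m - 1)) * S is * prod_list (map d (tl is))"
  shows "stab_set m n T = stab_set m n S"
  unfolding stab_set_def using assms by (intro Collect_cong) blast

lemma adj_tensor_scaling_invariant_iff:
  assumes "uniform_hypergraph m n E" and "m \<ge> 2" and nonzero: "\<forall>i<n. d i \<noteq> 0"
  shows "(\<forall>is\<in>idx_tuples m n.
      adj_tensor m E is = inverse (d (hd is) ^ (m - 1)) * adj_tensor m E is * prod_list (map d (tl is)))
    \<longleftrightarrow> (\<forall>e\<in>E. \<forall>i\<in>e. d i ^ (m - 1) = (\<Prod>j\<in>e - {i}. d j))"
proof -
  have tuple_iff: "adj_tensor m E (i # js) = inverse (d i ^ (m - 1)) * adj_tensor m E (i # js) * prod_list (map d js)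
      \<longleftrightarrow> (js \<in> {js \<in> idx_tuples (m - 1) n. set (i # js) \<in> E} \<longrightarrow> d i ^ (m - 1) = prod_list (map d js))"
    if "i < n" "js \<in> idx_tuples (m - 1) n" for i js
  proof -
    have "d i ^ (m - 1) \<noteq> 0" using nonzero that(1) by simp
    moreover have "adj_tensor m E (i # js) \<noteq> 0 \<longleftrightarrow> set (i # js) \<in> E"
      using that(2) assms(2) by (auto simp: adj_tensor_def idx_tuples_def)
    ultimately show ?thesis using that(2) eq_inverse_mult_mult_iff by blast
  qed
  have edge_iff: "(\<forall>js\<in>permutations_of_set (e - {i}). d i ^ (m - 1) = prod_list (map d js))
      \<longleftrightarrow> d i ^ (m - 1) = (\<Prod>j\<in>e - {i}. d j)" if "e \<in> E" for e i
    using permutations_of_set_empty_iff[of "e - {i}"] uniform_hypergraph_edgeD(3)[OF assms(1) that]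
    by (auto simp: prod_list_permutations_of_set)
  have "idx_tuples m n = idx_tuples (Suc (m - 1)) n" using assms(2) by simp
  then have "(\<forall>is\<in>idx_tuples m n.
      adj_tensor m E is = inverse (d (hd is) ^ (m - 1)) * adj_tensor m E is * prod_list (map d (tl is)))
    \<longleftrightarrow> (\<forall>i<n. \<forall>js\<in>idx_tuples (m - 1) n.
      adj_tensor m E (i # js) = inverse (d i ^ (m - 1)) * adj_tensor m E (i # js) * prod_list (map d js))"
    by (simp only: ball_idx_tuples_Suc list.sel)
  also have "\<dots> \<longleftrightarrow> (\<forall>i<n. \<forall>js\<in>{js \<in> idx_tuples (m - 1) n. set (i # js) \<in> E}. d i ^ (m - 1) = prod_list (map d js))"
    using tuple_iff by blast
  also have "\<dots> \<longleftrightarrow> (\<forall>i<n. \<forall>e\<in>E. i \<in> e \<longrightarrow> d i ^ (m - 1) = (\<Prod>j\<in>e - {i}. d j))"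
    using tuples_completing_edge[OF assms(1)] assms(2) edge_iff by auto
  also have "\<dots> \<longleftrightarrow> (\<forall>e\<in>E. \<forall>i\<in>e. d i ^ (m - 1) = (\<Prod>j\<in>e - {i}. d j))"
    using uniform_hypergraph_edgeD(1)[OF assms(1)] by blast
  finally show ?thesis .
qed

lemma stab_set_adj_tensor:
  assumes "uniform_hypergraph m n E" and "m \<ge> 2"
  shows "stab_set m n (adj_tensor m E) = Collect (edge_balanced m n E)"
proof -
  have "d \<in> stab_set m n (adj_tensor m E) \<longleftrightarrow> edge_balanced m n E d" for d
  proof (cases "\<forall>i<n. d i \<noteq> 0")
    case True
    then show ?thesis unfolding stab_set_def edge_balanced_def
      by (simp only: mem_Collect_eq adj_tensor_scaling_invariant_iff[OF assms True])
  qed (auto simp: stab_set_def edge_balanced_def)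
  then show ?thesis by (simp add: set_eq_iff)
qed

lemma stab_set_lap_tensor:
  assumes "m \<ge> 2"
  shows "stab_set m n (lap_tensor m E) = stab_set m n (adj_tensor m E)"
proof (rule stab_set_cong)
  fix d :: "nat \<Rightarrow> complex" and "is"
  assume nonzero: "\<forall>i<n. d i \<noteq> 0" and "is": "is \<in> idx_tuples m n"
  obtain h t where ht: "is = h # t" "h < n" "length t = m - 1"
    using "is" assms unfolding idx_tuples_def by (cases "is") auto
  show "lap_tensor m E is = inverse (d (hd is) ^ (m - 1)) * lap_tensor m E is * prod_list (map d (tl is)) \<longleftrightarrow>
      adj_tensor m E is = inverse (d (hd is) ^ (m - 1)) * adj_tensor m E is * prod_list (map d (tl is))"
  proof (cases "\<forall>j\<in>set t. j = h")
    case True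
    then have "t = replicate (m - 1) h" using ht(3) by (intro replicate_eqI) auto
    then have "prod_list (map d (tl is)) = d (hd is) ^ (m - 1)" using ht(1) by simp
    moreover have "d (hd is) ^ (m - 1) \<noteq> 0" using nonzero ht by simp
    ultimately have "inverse (d (hd is) ^ (m - 1)) * a * prod_list (map d (tl is)) = a" for a
      by (simp add: field_simps)
    then show ?thesis by simp
  next
    case False
    then have "lap_tensor m E is = - adj_tensor m E is"
      using ht by (auto simp: lap_tensor_def deg_tensor_def)
    then show ?thesis by simp
  qed
qed

section \<open>Stabilizing scalings as roots of unity\<close>

lemma hg_connected_propagate:
  assumes "hg_connected n E" and "i < n" "P i" and "j < n"
    and step: "\<And>e a b. e \<in> E \<Longrightarrow> a \<in> e \<Longrightarrow> b \<in> e \<Longrightarrow> P a \<Longrightarrow> P b"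
  shows "P j"
proof -
  have "(i, j) \<in> {(a, b). \<exists>e\<in>E. a \<in> e \<and> b \<in> e}\<^sup>*"
    using assms(1,2,4) unfolding hg_connected_def by blast
  then show ?thesis
    by (induction rule: rtrancl_induct) (use assms(3) step in auto)
qed

lemma edge_balanced_iff_roots_of_unity:
  assumes "uniform_hypergraph m n E" and "hg_connected n E" and "m \<ge> 1"
  shows "edge_balanced m n E d \<longleftrightarrow>
    (\<forall>i<n. d i ^ m = 1) \<and> (\<forall>i\<ge>n. d i = 1) \<and> d 0 = 1 \<and> (\<forall>e\<in>E. (\<Prod>j\<in>e. d j) = 1)"
proof -
  have split: "(\<Prod>j\<in>e. d j) = d i * (\<Prod>j\<in>e - {i}. d j)" if "e \<in> E" "i \<in> e" for e i
    using uniform_hypergraph_edgeD(3)[OF assms(1) that(1)] that(2) by (simp add: prod.remove)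
  have pow: "d i ^ m = d i * d i ^ (m - 1)" for i
    using assms(3) by (simp add: power_eq_if)
  have edge_in_range: "i < n" if "e \<in> E" "i \<in> e" for e i
    using uniform_hypergraph_edgeD(1)[OF assms(1) that(1)] that(2) by auto
  show ?thesis
  proof
    assume balanced: "edge_balanced m n E d"
    have edge: "d i ^ m = (\<Prod>j\<in>e. d j)" if "e \<in> E" "i \<in> e" for e i
      using balanced that split[OF that] pow unfolding edge_balanced_def by simp
    have roots: "d i ^ m = 1" if "i < n" for i
      using hg_connected_propagate[OF assms(2), of 0 "\<lambda>i. d i ^ m = 1" i] balanced that edge
      unfolding edge_balanced_def by fastforce
    have "(\<Prod>j\<in>e. d j) = 1" if "e \<in> E" for e
    proof -
      have "e \<noteq> {}" using uniform_hypergraph_edgeD(2)[OF assms(1) that] assms(3) by auto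
      then obtain i where "i \<in> e" by blast
      then show ?thesis using edge[OF that] roots edge_in_range[OF that] by metis
    qed
    then show "(\<forall>i<n. d i ^ m = 1) \<and> (\<forall>i\<ge>n. d i = 1) \<and> d 0 = 1 \<and> (\<forall>e\<in>E. (\<Prod>j\<in>e. d j) = 1)"
      using roots balanced unfolding edge_balanced_def by auto
  next
    assume roots: "(\<forall>i<n. d i ^ m = 1) \<and> (\<forall>i\<ge>n. d i = 1) \<and> d 0 = 1 \<and> (\<forall>e\<in>E. (\<Prod>j\<in>e. d j) = 1)"
    have nonzero: "d i \<noteq> 0" if "i < n" for i
      using roots that assms(3) by (metis one_neq_zero power_0_left not_one_le_zero)
    have "d i ^ (m - 1) = (\<Prod>j\<in>e - {i}. d j)" if "e \<in> E" "i \<in> e" for e i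
    proof -
      have "d i * d i ^ (m - 1) = d i * (\<Prod>j\<in>e - {i}. d j)"
        using roots pow split[OF that] edge_in_range[OF that] that(1) by metis
      then show ?thesis using nonzero[OF edge_in_range[OF that]] by simp
    qed
    then show "edge_balanced m n E d" using roots nonzero unfolding edge_balanced_def by auto
  qed
qed

definition unit_root :: "nat \<Rightarrow> complex" where
  "unit_root m = cis (2 * pi / real m)"

lemma unit_root_power: "unit_root m ^ k = cis (2 * pi * real k / real m)"
  by (simp add: unit_root_def DeMoivre mult.commute)

lemma unit_root_power_inj:
  "m > 0 \<Longrightarrow> a < m \<Longrightarrow> b < m \<Longrightarrow> unit_root m ^ a = unit_root m ^ b \<Longrightarrow> a = b"
  using bij_betw_roots_unity[of m] unfolding bij_betw_def inj_on_def unit_root_power by auto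

lemma root_of_unity_eq_unit_root_power:
  "m > 0 \<Longrightarrow> z ^ m = 1 \<Longrightarrow> \<exists>k<m. z = unit_root m ^ k"
  using bij_betw_roots_unity[of m] unfolding bij_betw_def unit_root_power by auto

lemma unit_root_power_eq_1_iff:
  assumes "m > 0"
  shows "unit_root m ^ k = 1 \<longleftrightarrow> m dvd k"
proof -
  have "unit_root m ^ k = unit_root m ^ (m * (k div m) + k mod m)" by simp
  also have "\<dots> = (unit_root m ^ m) ^ (k div m) * unit_root m ^ (k mod m)"
    by (simp only: power_add power_mult)
  also have "unit_root m ^ m = 1" by (simp add: unit_root_power)
  finally have "unit_root m ^ k = 1 \<longleftrightarrow> unit_root m ^ (k mod m) = unit_root m ^ 0" by simp
  also have "\<dots> \<longleftrightarrow> k mod m = 0"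
    using unit_root_power_inj[OF assms, of "k mod m" 0] assms by auto
  finally show ?thesis by auto
qed

lemma unit_root_prod_eq_1_iff:
  fixes a :: "nat \<Rightarrow> int"
  assumes "m > 0" and "\<And>j. j \<in> e \<Longrightarrow> a j \<ge> 0"
  shows "(\<Prod>j\<in>e. unit_root m ^ nat (a j)) = 1 \<longleftrightarrow> [(\<Sum>j\<in>e. a j) = 0] (mod int m)"
proof -
  have "(\<Prod>j\<in>e. unit_root m ^ nat (a j)) = unit_root m ^ (\<Sum>j\<in>e. nat (a j))"
    by (simp add: power_sum)
  moreover have "int (\<Sum>j\<in>e. nat (a j)) = (\<Sum>j\<in>e. a j)" using assms(2) by simp
  ultimately show ?thesis
    using unit_root_power_eq_1_iff[OF assms(1)] by (metis cong_0_iff int_dvd_int_iff)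
qed

definition unit_root_vector :: "nat \<Rightarrow> nat \<Rightarrow> (nat \<Rightarrow> int) \<Rightarrow> nat \<Rightarrow> complex" where
  "unit_root_vector m n a = (\<lambda>i. if i < n then unit_root m ^ nat (a i) else 1)"

lemma inj_on_unit_root_vector:
  assumes "m > 0"
  shows "inj_on (unit_root_vector m n) (residue_vectors n m)"
proof (rule inj_onI)
  fix a b assume a: "a \<in> residue_vectors n m" and b: "b \<in> residue_vectors n m"
    and "unit_root_vector m n a = unit_root_vector m n b"
  show "a = b"
  proof (rule PiE_ext)
    show "a \<in> PiE {..<n} (\<lambda>_. {0..<int m})" "b \<in> PiE {..<n} (\<lambda>_. {0..<int m})"
      using a b by (simp_all add: residue_vectors_def)
    fix i assume "i \<in> {..<n}"
    then have "unit_root m ^ nat (a i) = unit_root m ^ nat (b i)"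
      using \<open>unit_root_vector m n a = unit_root_vector m n b\<close>
      by (auto simp: unit_root_vector_def dest: fun_cong[of _ _ i])
    then show "a i = b i"
      using unit_root_power_inj[OF assms, of "nat (a i)" "nat (b i)"]
        residue_vectorsD[OF a, of i] residue_vectorsD[OF b, of i] \<open>i \<in> {..<n}\<close>
      by (simp add: nat_less_iff eq_nat_nat_iff)
  qed
qed

lemma unit_root_vector_image:
  assumes "m > 0"
  shows "unit_root_vector m n ` residue_vectors n m = {d. (\<forall>i<n. d i ^ m = 1) \<and> (\<forall>i\<ge>n. d i = 1)}"
proof (intro set_eqI iffI)
  fix d :: "nat \<Rightarrow> complex" assume "d \<in> unit_root_vector m n ` residue_vectors n m"
  then show "d \<in> {d. (\<forall>i<n. d i ^ m = 1) \<and> (\<forall>i\<ge>n. d i = 1)}"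
    by (auto simp: unit_root_vector_def unit_root_power_eq_1_iff[OF assms] simp flip: power_mult)
next
  fix d :: "nat \<Rightarrow> complex" assume d: "d \<in> {d. (\<forall>i<n. d i ^ m = 1) \<and> (\<forall>i\<ge>n. d i = 1)}"
  have "\<forall>i. \<exists>k. i < n \<longrightarrow> k < m \<and> d i = unit_root m ^ k"
    using root_of_unity_eq_unit_root_power[OF assms] d by blast
  then obtain k where k: "\<And>i. i < n \<Longrightarrow> k i < m \<and> d i = unit_root m ^ k i" by metis
  have "restrict (\<lambda>i. int (k i)) {..<n} \<in> residue_vectors n m"
    using k by (auto simp: residue_vectors_def)
  moreover have "unit_root_vector m n (restrict (\<lambda>i. int (k i)) {..<n}) = d"
    using k d by (auto simp: unit_root_vector_def)
  ultimately show "d \<in> unit_root_vector m n ` residue_vectors n m" by blast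
qed

lemma unit_root_vector_prod_eq_1_iff:
  assumes "m > 0" and "a \<in> residue_vectors n m" and "e \<subseteq> {..<n}"
  shows "(\<Prod>j\<in>e. unit_root_vector m n a j) = 1 \<longleftrightarrow> [(\<Sum>j\<in>e. a j) = 0] (mod int m)"
proof -
  have "(\<Prod>j\<in>e. unit_root_vector m n a j) = (\<Prod>j\<in>e. unit_root m ^ nat (a j))"
    using assms(3) by (intro prod.cong) (auto simp: unit_root_vector_def)
  then show ?thesis
    using unit_root_prod_eq_1_iff[OF assms(1)] residue_vectorsD[OF assms(2)] assms(3) by auto
qed

lemma unit_root_vector_0_eq_1_iff:
  assumes "m > 0" "n > 0" and "a \<in> residue_vectors n m"
  shows "unit_root_vector m n a 0 = 1 \<longleftrightarrow> a 0 = 0"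
  using unit_root_power_inj[OF assms(1), of "nat (a 0)" 0] residue_vectorsD[OF assms(3), of 0] assms(1,2)
  by (auto simp: unit_root_vector_def nat_less_iff)

lemma card_edge_roots_of_unity:
  assumes "uniform_hypergraph m n E" and "m > 0" "n > 0"
  shows "card {d :: nat \<Rightarrow> complex. (\<forall>i<n. d i ^ m = 1) \<and> (\<forall>i\<ge>n. d i = 1) \<and> d 0 = 1 \<and> (\<forall>e\<in>E. (\<Prod>j\<in>e. d j) = 1)}
    = card {a \<in> residue_vectors n m. a 0 = 0 \<and> (\<forall>e\<in>E. [(\<Sum>j\<in>e. a j) = 0] (mod int m))}"
    (is "card ?Roots = card ?Exponents")
proof -
  have edge_iff: "(\<Prod>j\<in>e. unit_root_vector m n a j) = 1 \<longleftrightarrow> [(\<Sum>j\<in>e. a j) = 0] (mod int m)"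
    if "a \<in> residue_vectors n m" "e \<in> E" for a e
    using unit_root_vector_prod_eq_1_iff[OF assms(2) that(1) uniform_hypergraph_edgeD(1)[OF assms(1) that(2)]] .
  have "?Roots = unit_root_vector m n ` ?Exponents"
  proof (intro set_eqI iffI)
    fix d assume d: "d \<in> ?Roots"
    then obtain a where a: "a \<in> residue_vectors n m" and "d = unit_root_vector m n a"
      using unit_root_vector_image[OF assms(2)] by blast
    then show "d \<in> unit_root_vector m n ` ?Exponents"
      using d edge_iff unit_root_vector_0_eq_1_iff[OF assms(2,3) a] by auto
  next
    fix d assume "d \<in> unit_root_vector m n ` ?Exponents"
    then obtain a where a: "a \<in> ?Exponents" and d: "d = unit_root_vector m n a" by blast
    then have "d \<in> unit_root_vector m n ` residue_vectors n m" by blast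
    then show "d \<in> ?Roots"
      using a d edge_iff unit_root_vector_0_eq_1_iff[OF assms(2,3)]
      unfolding unit_root_vector_image[OF assms(2)] by auto
  qed
  moreover have "inj_on (unit_root_vector m n) ?Exponents"
    using inj_on_unit_root_vector[OF assms(2)] by (rule inj_on_subset) blast
  ultimately show ?thesis by (simp add: card_image)
qed

lemma mat_vec_incidence:
  assumes "es ! k \<subseteq> {..<n}"
  shows "mat_vec n (incidence es) a k = (\<Sum>j\<in>es ! k. a j)"
proof -
  have "mat_vec n (incidence es) a k = (\<Sum>j<n. if j \<in> es ! k then a j else 0)"
    unfolding mat_vec_def incidence_def by (intro sum.cong) auto
  also have "\<dots> = (\<Sum>j\<in>{j\<in>{..<n}. j \<in> es ! k}. a j)" by (rule sum.inter_filter[symmetric]) simp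
  also have "{j\<in>{..<n}. j \<in> es ! k} = es ! k" using assms by auto
  finally show ?thesis .
qed

lemma null_space_mod_incidence:
  assumes "uniform_hypergraph m n E" and "set es = E"
  shows "null_space_mod m (length es) n (incidence es)
    = {a \<in> residue_vectors n m. \<forall>e\<in>E. [(\<Sum>j\<in>e. a j) = 0] (mod int m)}"
proof -
  have "mat_vec n (incidence es) a k = (\<Sum>j\<in>es ! k. a j)" if "k < length es" for a k
    using that assms uniform_hypergraph_edgeD(1)[OF assms(1)] by (intro mat_vec_incidence) (metis nth_mem)
  then have "(\<forall>k<length es. [mat_vec n (incidence es) a k = 0] (mod int m))
      \<longleftrightarrow> (\<forall>e\<in>E. [(\<Sum>j\<in>e. a j) = 0] (mod int m))" for a
    using all_set_conv_all_nth[of es "\<lambda>e. [(\<Sum>j\<in>e. a j) = 0] (mod int m)"] assms(2) by simp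
  then show ?thesis unfolding null_space_mod_def by simp
qed

section \<open>The zero eigenvariety of the Laplacian\<close>

lemma tensor_apply_diff:
  "tensor_apply m n (\<lambda>is. S is - T is) x i = tensor_apply m n S x i - tensor_apply m n T x i"
  unfolding tensor_apply_def by (simp add: left_diff_distrib sum_subtractf)

lemma tensor_apply_deg_tensor:
  assumes "m \<ge> 1" and "i < n"
  shows "tensor_apply m n (deg_tensor m E) x i = of_nat (hg_degree E i) * x i ^ (m - 1)"
proof -
  let ?rep = "replicate (m - 1) i"
  have "deg_tensor m E (i # js) * prod_list (map x js)
      = (if js = ?rep then of_nat (hg_degree E i) * prod_list (map x js) else 0)"
    if "js \<in> idx_tuples (m - 1) n" for js
    using that assms(1) by (auto simp: deg_tensor_def idx_tuples_def intro: replicate_eqI)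
  then have "tensor_apply m n (deg_tensor m E) x i
      = (\<Sum>js\<in>idx_tuples (m - 1) n. if js = ?rep then of_nat (hg_degree E i) * prod_list (map x js) else 0)"
    unfolding tensor_apply_def by (rule sum.cong[OF refl])
  also have "\<dots> = of_nat (hg_degree E i) * prod_list (map x ?rep)"
  proof -
    have "?rep \<in> idx_tuples (m - 1) n" using assms(2) by (auto simp: idx_tuples_def)
    then show ?thesis by (simp add: sum.delta finite_idx_tuples)
  qed
  finally show ?thesis by simp
qed

lemma tensor_apply_adj_tensor:
  assumes "uniform_hypergraph m n E" and "m \<ge> 1" and "i < n"
  shows "tensor_apply m n (adj_tensor m E) x i = (\<Sum>e\<in>{e\<in>E. i \<in> e}. \<Prod>j\<in>e - {i}. x j)"
proof -
  let ?c = "1 / of_nat (fact (m - 1)) :: complex"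
  have "tensor_apply m n (adj_tensor m E) x i
      = (\<Sum>js\<in>idx_tuples (m - 1) n. if set (i # js) \<in> E then ?c * prod_list (map x js) else 0)"
    unfolding tensor_apply_def using assms(2)
    by (intro sum.cong refl) (auto simp: adj_tensor_def idx_tuples_def)
  also have "\<dots> = (\<Sum>js\<in>{js \<in> idx_tuples (m - 1) n. set (i # js) \<in> E}. ?c * prod_list (map x js))"
    by (rule sum.inter_filter[symmetric, OF finite_idx_tuples])
  also have "\<dots> = (\<Sum>e\<in>{e\<in>E. i \<in> e}. \<Sum>js\<in>permutations_of_set (e - {i}). ?c * prod_list (map x js))"
    unfolding tuples_completing_edge[OF assms]
  proof (rule sum.UNION_disjoint)
    show "finite {e\<in>E. i \<in> e}" using finite_uniform_hypergraph[OF assms(1)] by simp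
    show "\<forall>e\<in>{e\<in>E. i \<in> e}. finite (permutations_of_set (e - {i}))" by simp
    show "\<forall>e\<in>{e\<in>E. i \<in> e}. \<forall>e'\<in>{e\<in>E. i \<in> e}. e \<noteq> e' \<longrightarrow>
        permutations_of_set (e - {i}) \<inter> permutations_of_set (e' - {i}) = {}"
      by (auto dest!: permutations_of_setD(1))
  qed
  also have "\<dots> = (\<Sum>e\<in>{e\<in>E. i \<in> e}. \<Prod>j\<in>e - {i}. x j)"
  proof (intro sum.cong refl)
    fix e assume e: "e \<in> {e\<in>E. i \<in> e}"
    then have "finite (e - {i})" "card (e - {i}) = m - 1"
      using uniform_hypergraph_edgeD[OF assms(1)] by auto
    then show "(\<Sum>js\<in>permutations_of_set (e - {i}). ?c * prod_list (map x js)) = (\<Prod>j\<in>e - {i}. x j)"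
      by (simp add: prod_list_permutations_of_set cong: sum.cong)
  qed
  finally show ?thesis .
qed

lemma tensor_apply_lap_tensor:
  assumes "uniform_hypergraph m n E" and "m \<ge> 1" and "i < n"
  shows "tensor_apply m n (lap_tensor m E) x i
       = of_nat (hg_degree E i) * x i ^ (m - 1) - (\<Sum>e\<in>{e\<in>E. i \<in> e}. \<Prod>j\<in>e - {i}. x j)"
  unfolding lap_tensor_def tensor_apply_diff
  using tensor_apply_deg_tensor[OF assms(2,3)] tensor_apply_adj_tensor[OF assms] by simp

lemma sum_eq_card_mult_imp_eq:
  fixes z :: "'a \<Rightarrow> complex"
  assumes "finite K" and bound: "\<And>k. k \<in> K \<Longrightarrow> norm (z k) \<le> norm w"
    and sum: "(\<Sum>k\<in>K. z k) = of_nat (card K) * w" and "k \<in> K"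
  shows "z k = w"
proof (cases "w = 0")
  case True
  then show ?thesis using bound[OF assms(4)] by simp
next
  case False
  define u where "u k = z k / w" for k
  have norm_u: "norm (u k) \<le> 1" if "k \<in> K" for k
    using bound[OF that] False by (simp add: u_def norm_divide divide_le_eq_1)
  have "(\<Sum>k\<in>K. u k) = of_nat (card K)"
    using sum False by (simp add: u_def flip: sum_divide_distrib)
  then have "(\<Sum>k\<in>K. 1 - Re (u k)) = 0"
    by (simp add: sum_subtractf flip: Re_sum)
  moreover have "0 \<le> 1 - Re (u k)" if "k \<in> K" for k
    using abs_Re_le_cmod[of "u k"] norm_u[OF that] by linarith
  ultimately have "\<forall>k\<in>K. 1 - Re (u k) = 0"
    by (simp add: sum_nonneg_eq_0_iff[OF assms(1)])
  then have "Re (u k) = 1" using assms(4) by simp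
  moreover have "(Re (u k))\<^sup>2 + (Im (u k))\<^sup>2 \<le> 1"
  proof -
    have "(cmod (u k))\<^sup>2 \<le> 1" using norm_u[OF assms(4)] by (simp add: power_le_one)
    then show ?thesis by (simp add: cmod_power2)
  qed
  ultimately have "u k = 1" by (simp add: complex_eq_iff)
  then show ?thesis using False by (simp add: u_def)
qed

lemma prod_eq_power_imp_eq:
  fixes f :: "'a \<Rightarrow> real"
  assumes "finite S" and bound: "\<And>k. k \<in> S \<Longrightarrow> 0 \<le> f k \<and> f k \<le> M" and "M > 0"
    and prod: "prod f S = M ^ card S" and "k \<in> S"
  shows "f k = M"
proof (rule ccontr)
  assume "f k \<noteq> M"
  then have "f k < M" using bound[OF assms(5)] by simp
  have "prod f S = f k * prod f (S - {k})" using assms(1,5) by (simp add: prod.remove)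
  also have "\<dots> \<le> f k * M ^ (card S - 1)"
  proof (intro mult_left_mono)
    have "prod f (S - {k}) \<le> (\<Prod>_\<in>S - {k}. M)" using bound by (intro prod_mono) auto
    then show "prod f (S - {k}) \<le> M ^ (card S - 1)" using assms(1,5) by simp
  qed (use bound assms(5) in auto)
  also have "\<dots> < M * M ^ (card S - 1)" using \<open>f k < M\<close> assms(3) by simp
  also have "\<dots> = M ^ card S"
  proof -
    have "card S \<noteq> 0" using assms(1,5) by auto
    then show ?thesis by (simp add: power_eq_if)
  qed
  finally show False using prod by simp
qed

lemma lap_kernel_edge_at_max:
  assumes "uniform_hypergraph m n E" and "m \<ge> 1" and "i < n"
    and kernel: "tensor_apply m n (lap_tensor m E) x i = 0"
    and max: "\<And>j. j < n \<Longrightarrow> norm (x j) \<le> norm (x i)" and "x i \<noteq> 0"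
    and "e \<in> E" "i \<in> e"
  shows "(\<Prod>j\<in>e - {i}. x j) = x i ^ (m - 1) \<and> (\<forall>j\<in>e. norm (x j) = norm (x i))"
proof -
  let ?Ei = "{e\<in>E. i \<in> e}"
  have edge: "finite f" "f \<subseteq> {..<n}" "card (f - {i}) = m - 1" if "f \<in> ?Ei" for f
    using uniform_hypergraph_edgeD[OF assms(1)] that by auto
  have norm_bound: "norm (\<Prod>j\<in>f - {i}. x j) \<le> norm (x i ^ (m - 1))" if "f \<in> ?Ei" for f
  proof -
    have "norm (\<Prod>j\<in>f - {i}. x j) = (\<Prod>j\<in>f - {i}. norm (x j))" by (simp add: prod_norm)
    also have "\<dots> \<le> (\<Prod>j\<in>f - {i}. norm (x i))"
      using max edge[OF that] by (intro prod_mono) auto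
    finally show ?thesis using edge(3)[OF that] by (simp add: norm_power)
  qed
  have "of_nat (card ?Ei) * x i ^ (m - 1) - (\<Sum>f\<in>?Ei. \<Prod>j\<in>f - {i}. x j) = 0"
    using kernel unfolding tensor_apply_lap_tensor[OF assms(1-3)] hg_degree_def .
  then have sum_eq: "(\<Sum>f\<in>?Ei. \<Prod>j\<in>f - {i}. x j) = of_nat (card ?Ei) * x i ^ (m - 1)"
    by simp
  have prod_eq: "(\<Prod>j\<in>e - {i}. x j) = x i ^ (m - 1)"
  proof (rule sum_eq_card_mult_imp_eq[of ?Ei "\<lambda>f. \<Prod>j\<in>f - {i}. x j" _ e])
    show "finite ?Ei" using finite_uniform_hypergraph[OF assms(1)] by simp
    show "e \<in> ?Ei" using assms(7,8) by simp
  qed (use norm_bound sum_eq in auto)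
  have prod_norm_eq: "(\<Prod>j\<in>e - {i}. norm (x j)) = norm (x i) ^ card (e - {i})"
    using arg_cong[OF prod_eq, of norm] edge(3) assms(7,8) by (simp add: prod_norm norm_power)
  have norm_eq: "norm (x j) = norm (x i)" if "j \<in> e - {i}" for j
  proof (rule prod_eq_power_imp_eq[OF _ _ _ prod_norm_eq that])
    show "finite (e - {i})" "0 < norm (x i)" using edge(1) assms(6-8) by auto
    show "0 \<le> norm (x k) \<and> norm (x k) \<le> norm (x i)" if "k \<in> e - {i}" for k
      using max edge(2) assms(7,8) that by auto
  qed
  have "\<forall>j\<in>e. norm (x j) = norm (x i)"
  proof
    fix j assume "j \<in> e"
    then show "norm (x j) = norm (x i)" using norm_eq[of j] by (cases "j = i") simp_all
  qed
  with prod_eq show ?thesis ..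
qed

lemma lap_kernel_edge_balanced:
  assumes "uniform_hypergraph m n E" and "hg_connected n E" and "m \<ge> 1"
    and "x \<in> cvec n" "x \<noteq> (\<lambda>_. 0)" and kernel: "\<forall>i<n. tensor_apply m n (lap_tensor m E) x i = 0"
  shows "(\<forall>i<n. x i \<noteq> 0) \<and> (\<forall>e\<in>E. \<forall>i\<in>e. (\<Prod>j\<in>e - {i}. x j) = x i ^ (m - 1))"
proof -
  have in_range: "j < n" if "e \<in> E" "j \<in> e" for e j
    using uniform_hypergraph_edgeD(1)[OF assms(1) that(1)] that(2) by auto
  obtain i1 where "x i1 \<noteq> 0" using assms(5) by auto
  have "i1 < n"
  proof (rule ccontr)
    assume "\<not> i1 < n"
    then show False using assms(4) \<open>x i1 \<noteq> 0\<close> by (simp add: cvec_def)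
  qed
  define M where "M = Max ((\<lambda>j. norm (x j)) ` {..<n})"
  have "M \<in> (\<lambda>j. norm (x j)) ` {..<n}" unfolding M_def using \<open>i1 < n\<close> by (intro Max_in) auto
  then obtain i0 where i0: "i0 < n" "norm (x i0) = M" by auto
  have le_M: "norm (x j) \<le> M" if "j < n" for j unfolding M_def using that by (intro Max_ge) auto
  have "x i0 \<noteq> 0" using le_M[OF \<open>i1 < n\<close>] i0(2) \<open>x i1 \<noteq> 0\<close> by auto
  have all_max: "norm (x j) = M" if "j < n" for j
  proof (rule hg_connected_propagate[OF assms(2) i0(1) _ that])
    fix e a b assume e: "e \<in> E" "a \<in> e" "b \<in> e" and a: "norm (x a) = M"
    have "a < n" using in_range[OF e(1,2)] .
    have "x a \<noteq> 0" using a i0(2) \<open>x i0 \<noteq> 0\<close> by auto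
    moreover have "norm (x j) \<le> norm (x a)" if "j < n" for j using le_M[OF that] a by simp
    ultimately have "\<forall>j\<in>e. norm (x j) = norm (x a)"
      using lap_kernel_edge_at_max[OF assms(1,3) \<open>a < n\<close> kernel[rule_format, OF \<open>a < n\<close>] _ _ e(1,2)]
      by blast
    then show "norm (x b) = M" using e(3) a by simp
  qed (use i0(2) in simp)
  have nonzero: "x i \<noteq> 0" if "i < n" for i
    using all_max[OF that] i0(2) \<open>x i0 \<noteq> 0\<close> by auto
  have "(\<Prod>j\<in>e - {i}. x j) = x i ^ (m - 1)" if "e \<in> E" "i \<in> e" for e i
  proof -
    have "norm (x j) \<le> norm (x i)" if "j < n" for j using all_max that in_range[OF \<open>e \<in> E\<close> \<open>i \<in> e\<close>] by simp
    then show ?thesis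
      using lap_kernel_edge_at_max[OF assms(1,3) in_range[OF that] kernel[rule_format, OF in_range[OF that]]
          _ nonzero[OF in_range[OF that]] that]
      by blast
  qed
  then show ?thesis using nonzero by blast
qed

lemma proj_point_scale:
  assumes "c \<noteq> 0"
  shows "proj_point (\<lambda>i. c * x i) = proj_point x"
  unfolding proj_point_def
proof (intro set_eqI iffI)
  fix y assume "y \<in> {\<lambda>i. c' * (c * x i) |c'. c' \<noteq> 0}"
  then obtain c' where "c' \<noteq> 0" "y = (\<lambda>i. c' * (c * x i))" by blast
  then show "y \<in> {\<lambda>i. c' * x i |c'. c' \<noteq> 0}"
    using assms by (intro CollectI exI[of _ "c' * c"]) (auto simp: mult.assoc)
next
  fix y assume "y \<in> {\<lambda>i. c' * x i |c'. c' \<noteq> 0}"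
  then obtain c' where "c' \<noteq> 0" "y = (\<lambda>i. c' * x i)" by blast
  then show "y \<in> {\<lambda>i. c' * (c * x i) |c'. c' \<noteq> 0}"
    using assms by (intro CollectI exI[of _ "c' / c"]) auto
qed

lemma proj_point_eq_imp_eq:
  assumes "proj_point x = proj_point y" and "x 0 = 1" "y 0 = 1"
  shows "x = y"
proof -
  have "x \<in> proj_point x" unfolding proj_point_def by (intro CollectI exI[of _ 1]) simp
  then obtain c where "x = (\<lambda>i. c * y i)" using assms(1) unfolding proj_point_def by blast
  moreover from this have "c = 1" using assms(2,3) by (metis mult.right_neutral)
  ultimately show ?thesis by simp
qed

definition truncate_vec :: "nat \<Rightarrow> (nat \<Rightarrow> complex) \<Rightarrow> nat \<Rightarrow> complex" where
  "truncate_vec n d = (\<lambda>i. if i < n then d i else 0)"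

lemma edge_balanced_lap_kernel:
  assumes "uniform_hypergraph m n E" and "m \<ge> 1" and "edge_balanced m n E d" and "i < n"
  shows "tensor_apply m n (lap_tensor m E) (truncate_vec n d) i = 0"
proof -
  have "(\<Prod>j\<in>e - {i}. truncate_vec n d j) = d i ^ (m - 1)" if "e \<in> {e\<in>E. i \<in> e}" for e
  proof -
    have "(\<Prod>j\<in>e - {i}. truncate_vec n d j) = (\<Prod>j\<in>e - {i}. d j)"
      using uniform_hypergraph_edgeD(1)[OF assms(1)] that by (intro prod.cong) (auto simp: truncate_vec_def)
    moreover have "d i ^ (m - 1) = (\<Prod>j\<in>e - {i}. d j)"
      using assms(3) that unfolding edge_balanced_def by blast
    ultimately show ?thesis by simp
  qed
  then show ?thesis
    using assms(4) by (simp add: tensor_apply_lap_tensor[OF assms(1,2,4)] hg_degree_def truncate_vec_def)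
qed

lemma lap_kernel_normalize:
  assumes "uniform_hypergraph m n E" and "hg_connected n E" and "m \<ge> 1"
    and "x \<in> cvec n" "x \<noteq> (\<lambda>_. 0)" and "\<forall>i<n. tensor_apply m n (lap_tensor m E) x i = 0"
  shows "edge_balanced m n E (\<lambda>i. if i < n then x i / x 0 else 1)"
    and "proj_point (truncate_vec n (\<lambda>i. if i < n then x i / x 0 else 1)) = proj_point x"
proof -
  note balanced = lap_kernel_edge_balanced[OF assms]
  have "n > 0" using assms(4,5) by (auto simp: cvec_def)
  then have "x 0 \<noteq> 0" using balanced by simp
  have edge: "e \<subseteq> {..<n}" "finite e" "card (e - {i}) = m - 1" if "e \<in> E" "i \<in> e" for e i
    using uniform_hypergraph_edgeD[OF assms(1) that(1)] that(2) by auto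
  show "edge_balanced m n E (\<lambda>i. if i < n then x i / x 0 else 1)"
    unfolding edge_balanced_def
  proof (intro conjI allI impI ballI)
    fix e i assume "e \<in> E" "i \<in> e"
    have "(\<Prod>j\<in>e - {i}. if j < n then x j / x 0 else 1) = (\<Prod>j\<in>e - {i}. x j / x 0)"
      using edge(1)[OF \<open>e \<in> E\<close> \<open>i \<in> e\<close>] by (intro prod.cong) auto
    also have "\<dots> = (\<Prod>j\<in>e - {i}. x j) / x 0 ^ (m - 1)"
      using edge(3)[OF \<open>e \<in> E\<close> \<open>i \<in> e\<close>] by (simp add: prod_dividef)
    finally have "(\<Prod>j\<in>e - {i}. if j < n then x j / x 0 else 1) = (\<Prod>j\<in>e - {i}. x j) / x 0 ^ (m - 1)" .
    then show "(if i < n then x i / x 0 else 1) ^ (m - 1) = (\<Prod>j\<in>e - {i}. if j < n then x j / x 0 else 1)"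
      using balanced \<open>e \<in> E\<close> \<open>i \<in> e\<close> edge(1)[OF \<open>e \<in> E\<close> \<open>i \<in> e\<close>] by (auto simp: power_divide)
  qed (use balanced \<open>x 0 \<noteq> 0\<close> \<open>n > 0\<close> in auto)
  have "truncate_vec n (\<lambda>i. if i < n then x i / x 0 else 1) = (\<lambda>i. (1 / x 0) * x i)"
    using assms(4) by (auto simp: cvec_def truncate_vec_def)
  then show "proj_point (truncate_vec n (\<lambda>i. if i < n then x i / x 0 else 1)) = proj_point x"
    using proj_point_scale[of "1 / x 0" x] \<open>x 0 \<noteq> 0\<close> by simp
qed

lemma card_eigvariety_lap_tensor_zero:
  assumes "uniform_hypergraph m n E" and "hg_connected n E" and "m \<ge> 1" and "n \<ge> 1"
  shows "card (eigvariety m n (lap_tensor m E) 0) = card (Collect (edge_balanced m n E))"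
proof -
  have eigvariety: "eigvariety m n (lap_tensor m E) 0 = proj_point ` {x \<in> cvec n. x \<noteq> (\<lambda>_. 0) \<and>
      (\<forall>i<n. tensor_apply m n (lap_tensor m E) x i = 0)}"
    by (simp add: eigvariety_def)
  have "bij_betw (\<lambda>d. proj_point (truncate_vec n d)) (Collect (edge_balanced m n E)) (eigvariety m n (lap_tensor m E) 0)"
  proof (rule bij_betw_imageI)
    show "inj_on (\<lambda>d. proj_point (truncate_vec n d)) (Collect (edge_balanced m n E))"
    proof (rule inj_onI)
      fix d d' assume d: "d \<in> Collect (edge_balanced m n E)" "d' \<in> Collect (edge_balanced m n E)"
        and "proj_point (truncate_vec n d) = proj_point (truncate_vec n d')"
      then have "truncate_vec n d = truncate_vec n d'"
        using assms(4) by (intro proj_point_eq_imp_eq) (auto simp: truncate_vec_def edge_balanced_def)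
      show "d = d'"
      proof
        fix i show "d i = d' i"
          using fun_cong[OF \<open>truncate_vec n d = truncate_vec n d'\<close>, of i] d
          by (cases "i < n") (auto simp: truncate_vec_def edge_balanced_def)
      qed
    qed
    show "(\<lambda>d. proj_point (truncate_vec n d)) ` Collect (edge_balanced m n E) = eigvariety m n (lap_tensor m E) 0"
      unfolding eigvariety
    proof (intro set_eqI iffI)
      fix P assume "P \<in> (\<lambda>d. proj_point (truncate_vec n d)) ` Collect (edge_balanced m n E)"
      then obtain d where d: "edge_balanced m n E d" and P: "P = proj_point (truncate_vec n d)" by blast
      have "truncate_vec n d \<in> cvec n" "truncate_vec n d 0 = 1"
        using d assms(4) by (auto simp: truncate_vec_def cvec_def edge_balanced_def)
      moreover have "\<forall>i<n. tensor_apply m n (lap_tensor m E) (truncate_vec n d) i = 0"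
        using edge_balanced_lap_kernel[OF assms(1,3) d] by blast
      ultimately show "P \<in> proj_point ` {x \<in> cvec n. x \<noteq> (\<lambda>_. 0) \<and> (\<forall>i<n. tensor_apply m n (lap_tensor m E) x i = 0)}"
        unfolding P by (intro imageI CollectI conjI) (auto dest: fun_cong[of _ _ 0])
    next
      fix P assume "P \<in> proj_point ` {x \<in> cvec n. x \<noteq> (\<lambda>_. 0) \<and> (\<forall>i<n. tensor_apply m n (lap_tensor m E) x i = 0)}"
      then obtain x where x: "x \<in> cvec n" "x \<noteq> (\<lambda>_. 0)" "\<forall>i<n. tensor_apply m n (lap_tensor m E) x i = 0"
        and P: "P = proj_point x" by blast
      show "P \<in> (\<lambda>d. proj_point (truncate_vec n d)) ` Collect (edge_balanced m n E)"
        unfolding P using lap_kernel_normalize[OF assms(1-3) x] by (intro image_eqI[OF sym]) auto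
    qed
  qed
  then show ?thesis by (simp add: bij_betw_same_card)
qed

section \<open>Counting the stabilizing scalings\<close>

lemma incidence_row_sum:
  assumes "uniform_hypergraph m n E" and "set es = E" and "k < length es"
  shows "(\<Sum>j<n. incidence es k j) = int m"
proof -
  have "es ! k \<in> E" using assms(2,3) by auto
  then have "(\<Sum>j<n. incidence es k j) = (\<Sum>j\<in>es ! k. 1)"
    using mat_vec_incidence[of es k n "\<lambda>_. 1"] uniform_hypergraph_edgeD(1)[OF assms(1)]
    by (simp add: mat_vec_def)
  then show ?thesis using uniform_hypergraph_edgeD(2)[OF assms(1) \<open>es ! k \<in> E\<close>] by simp
qed

lemma card_edge_balanced_eq_card_fixed_null_space:
  assumes "uniform_hypergraph m n E" and "hg_connected n E" and "m \<ge> 1" and "n \<ge> 1"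
    and "set es = E"
  shows "card (Collect (edge_balanced m n E))
    = card {a \<in> null_space_mod m (length es) n (incidence es). a 0 = 0}"
proof -
  have "Collect (edge_balanced m n E) = {d. (\<forall>i<n. d i ^ m = 1) \<and> (\<forall>i\<ge>n. d i = 1) \<and> d 0 = 1 \<and>
      (\<forall>e\<in>E. (\<Prod>j\<in>e. d j) = 1)}"
    using edge_balanced_iff_roots_of_unity[OF assms(1-3)] by blast
  also have "card \<dots> = card {a \<in> residue_vectors n m. a 0 = 0 \<and> (\<forall>e\<in>E. [(\<Sum>j\<in>e. a j) = 0] (mod int m))}"
    using card_edge_roots_of_unity[OF assms(1)] assms(3,4) by simp
  also have "{a \<in> residue_vectors n m. a 0 = 0 \<and> (\<forall>e\<in>E. [(\<Sum>j\<in>e. a j) = 0] (mod int m))}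
      = {a \<in> null_space_mod m (length es) n (incidence es). a 0 = 0}"
    unfolding null_space_mod_incidence[OF assms(1,5)] by blast
  finally show ?thesis .
qed

lemma card_fixed_null_space_incidence:
  assumes "uniform_hypergraph m n E" and "m \<ge> 1" and "n \<ge> 1" and "set es = E"
    and "smith_normal_form_mod m (length es) n (incidence es) r d"
  shows "int m * int (card {a \<in> null_space_mod m (length es) n (incidence es). a 0 = 0})
    = int m ^ (n - r) * (\<Prod>i<r. d i)"
proof -
  let ?Null = "null_space_mod m (length es) n (incidence es)"
  have "card ?Null = m * card {a \<in> ?Null. a 0 = 0}"
  proof (rule card_null_space_mod_eq_mult_card_fixed)
    show "[(\<Sum>j<n. incidence es k j) = 0] (mod int m)" if "k < length es" for k
      using incidence_row_sum[OF assms(1,4) that] by (simp add: cong_0_iff)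
  qed (use assms(2,3) in auto)
  then have "int m * int (card {a \<in> ?Null. a 0 = 0}) = int (card ?Null)" by simp
  also have "\<dots> = int m ^ (n - r) * (\<Prod>i<r. d i)"
    using card_null_space_mod_smith[OF assms(5)] assms(2) by simp
  finally show ?thesis .
qed

lemma power_diff_eq_mult_power_int:
  fixes x :: "'a :: field"
  assumes "r \<le> n" and "x \<noteq> 0"
  shows "x ^ (n - r) = x * x powi (int n - 1 - int r)"
proof -
  have "int n - 1 - int r = int (n - r) - 1" using assms(1) by simp
  moreover have "x powi (int (n - r) - 1) * x = x powi int (n - r)"
    using assms(2) by (intro power_int_minus_mult) simp
  ultimately show ?thesis by (simp only: power_int_of_nat mult.commute)
qed

lemma card_edge_balanced:
  assumes "uniform_hypergraph m n E" and "hg_connected n E" and "m \<ge> 1" and "n \<ge> 1"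
    and "set es = E" and snf: "smith_normal_form_mod m (length es) n (incidence es) r d"
  shows "real (card (Collect (edge_balanced m n E)))
    = real m powi (int n - 1 - int r) * (\<Prod>i<r. real_of_int (d i))"
proof -
  let ?K = "card {a \<in> null_space_mod m (length es) n (incidence es). a 0 = 0}"
  have "real_of_int (int m * int ?K) = real_of_int (int m ^ (n - r) * (\<Prod>i<r. d i))"
    using card_fixed_null_space_incidence[OF assms(1,3,4,5) snf] by (rule arg_cong)
  then have "real m * real ?K = real m ^ (n - r) * (\<Prod>i<r. real_of_int (d i))"
    by simp
  also have "real m ^ (n - r) = real m * real m powi (int n - 1 - int r)"
    using snf assms(3) unfolding smith_normal_form_mod_def by (intro power_diff_eq_mult_power_int) auto
  finally have "real m * real ?K = real m * (real m powi (int n - 1 - int r) * (\<Prod>i<r. real_of_int (d i)))"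
    by (simp only: mult.assoc)
  then show ?thesis
    using assms(3) card_edge_balanced_eq_card_fixed_null_space[OF assms(1-5)] by simp
qed

theorem theorem3p5:
  fixes m n r :: nat and E :: "nat set set" and es :: "nat set list" and d :: "nat \<Rightarrow> int"
  assumes "m \<ge> 2" and "n \<ge> 1"
    and "uniform_hypergraph m n E" and "hg_connected n E"
    and "distinct es" and "set es = E"
    and "smith_normal_form_mod m (length es) n (incidence es) r d"
  shows "card (eigvariety m n (lap_tensor m E) 0) = stab_index m n (lap_tensor m E)
       \<and> stab_index m n (lap_tensor m E) = stab_index m n (adj_tensor m E)
       \<and> real (stab_index m n (adj_tensor m E))
           = real m powi (int n - 1 - int r) * (\<Prod>i<r. real_of_int (d i))"
proof -
  have "m \<ge> 1" using assms(1) by simp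
  have "stab_set m n (lap_tensor m E) = Collect (edge_balanced m n E)"
    and "stab_set m n (adj_tensor m E) = Collect (edge_balanced m n E)"
    using stab_set_lap_tensor[OF assms(1)] stab_set_adj_tensor[OF assms(3,1)] by simp_all
  moreover have "card (eigvariety m n (lap_tensor m E) 0) = card (Collect (edge_balanced m n E))"
    using card_eigvariety_lap_tensor_zero[OF assms(3,4) \<open>m \<ge> 1\<close> assms(2)] .
  moreover have "real (card (Collect (edge_balanced m n E)))
      = real m powi (int n - 1 - int r) * (\<Prod>i<r. real_of_int (d i))"
    using card_edge_balanced[OF assms(3,4) \<open>m \<ge> 1\<close> assms(2,6,7)] .
  ultimately show ?thesis unfolding stab_index_def by simp
qed

end
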